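(* Let $(X_1,Y_1),\dots,(X_{n+1},Y_{n+1})$ be exchangeable random elements of $\mathcal{X}\times\mathcal{Y}$, let $f$ be a fixed model, $\mathcal{L}(f,x,y)\in[0,1]$ a known risk map, and $s:\mathcal{X}\to[0,1]$ a fixed score function (independent of the data). Write $L_i=\mathcal{L}(f,X_i,Y_i)$ for $i\in[n+1]$. For any fixed $\gamma\in(0,1)$, the random variable $E_{\gamma,n+1}$ defined below satisfies $E_{\gamma,n+1}\ge0$ and $\mathbb{E}[L_{n+1}E_{\gamma,n+1}]\le 1$.
   Context: Let $\mathcal{M}=\{s(X_i)\}_{i=1}^{n+1}$. For $t\in\mathbb{R}$ and $\ell\in[0,1]$ define $F(t;\ell)=\frac{1}{n+1}\big(\sum_{i=1}^n L_i\mathbf{1}\{s(X_i)\le t\}+\ell\,\mathbf{1}\{s(X_{n+1})\le t\}\big)$ and $t_\gamma(\ell)=\max\{t\in\mathcal{M}:F(t;\ell)\le\gamma\}$, with $\max\emptyset=-\infty$. Define $$E_{\gamma,n+1}=\inf_{\ell\in[0,1]}\frac{(n+1)\mathbf{1}\{s(X_{n+1})\le t_\gamma(\ell)\}}{\sum_{i=1}^n L_i\mathbf{1}\{s(X_i)\le t_\gamma(\ell)\}+\ell\,\mathbf{1}\{s(X_{n+1})\le t_\gamma(\ell)\}},$$ where each ratio is $0$ when its numerator is $0$ and $+\infty$ when its numerator is positive and denominator is $0$; also $E_{\gamma,n+1}=0$ if $\inf_{\ell\in[0,1]}t_\gamma(\ell)=-\infty$. *)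

theory Defs
  imports "HOL-Probability.Probability"
begin

text \<open>Data are indexed by 1..n+1; index n+1 is the test point.
  sc i = s(X_i) (scores), Ls i = L_i (losses).\<close>

definition F_hat :: "nat \<Rightarrow> (nat \<Rightarrow> real) \<Rightarrow> (nat \<Rightarrow> real) \<Rightarrow> real \<Rightarrow> real \<Rightarrow> real" where
  "F_hat n Ls sc t l =
     ((\<Sum>i=1..n. Ls i * (if sc i \<le> t then 1 else 0)) + l * (if sc (n+1) \<le> t then 1 else 0))
     / real (n + 1)"

definition t_gamma :: "nat \<Rightarrow> (nat \<Rightarrow> real) \<Rightarrow> (nat \<Rightarrow> real) \<Rightarrow> real \<Rightarrow> real \<Rightarrow> ereal" where
  "t_gamma n Ls sc \<gamma> l =
     (let S = {t \<in> sc ` {1..n+1}. F_hat n Ls sc t l \<le> \<gamma>}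
      in if S = {} then -\<infinity> else ereal (Max S))"

definition E_ratio :: "nat \<Rightarrow> (nat \<Rightarrow> real) \<Rightarrow> (nat \<Rightarrow> real) \<Rightarrow> real \<Rightarrow> real \<Rightarrow> ereal" where
  "E_ratio n Ls sc \<gamma> l =
     (let t = t_gamma n Ls sc \<gamma> l;
          num = real (n + 1) * (if ereal (sc (n+1)) \<le> t then 1 else 0);
          den = (\<Sum>i=1..n. Ls i * (if ereal (sc i) \<le> t then 1 else 0))
                + l * (if ereal (sc (n+1)) \<le> t then 1 else 0)
      in if num = 0 then 0 else if den = 0 then \<infinity> else ereal (num / den))"

definition E_gamma :: "nat \<Rightarrow> (nat \<Rightarrow> real) \<Rightarrow> (nat \<Rightarrow> real) \<Rightarrow> real \<Rightarrow> ereal" where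
  "E_gamma n Ls sc \<gamma> =
     (if (INF l\<in>{0..1}. t_gamma n Ls sc \<gamma> l) = -\<infinity> then 0
      else (INF l\<in>{0..1}. E_ratio n Ls sc \<gamma> l))"

end

theory Submission
  imports Defs
begin

text \<open>Plug the test loss itself into the infimum: with \<open>\<ell> = L\<^sub>n\<^sub>+\<^sub>1\<close> the threshold
  \<open>t\<^sub>\<gamma>(L\<^sub>n\<^sub>+\<^sub>1)\<close> is a symmetric function of the data (an oracle threshold), so
  \<open>L\<^sub>n\<^sub>+\<^sub>1 E\<^sub>\<gamma>\<^sub>,\<^sub>n\<^sub>+\<^sub>1 \<le> (n+1) G\<^sub>n\<^sub>+\<^sub>1\<close>, where \<open>G\<^sub>j\<close> is the share of the loss of point \<open>j\<close>
  among all losses of points selected by that threshold.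
  The shares sum to at most 1, and by exchangeability all \<open>G\<^sub>j\<close> have the same expectation,
  which is therefore at most \<open>1/(n+1)\<close>.\<close>

definition loss_cdf :: "'i set \<Rightarrow> ('i \<Rightarrow> real) \<Rightarrow> ('i \<Rightarrow> real) \<Rightarrow> real \<Rightarrow> real" where
  "loss_cdf A L S t = (\<Sum>i\<in>A. if S i \<le> t then L i else 0)"

text \<open>\<open>S j\<close> lies below the oracle threshold \<open>max {S k | k \<in> A, loss_cdf A L S (S k) \<le> c}\<close>;
  the existential form avoids taking the maximum of a possibly empty set.\<close>
definition selected :: "'i set \<Rightarrow> ('i \<Rightarrow> real) \<Rightarrow> ('i \<Rightarrow> real) \<Rightarrow> real \<Rightarrow> 'i \<Rightarrow> bool" where
  "selected A L S c j \<longleftrightarrow> (\<exists>k\<in>A. loss_cdf A L S (S k) \<le> c \<and> S j \<le> S k)"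

definition selected_loss :: "'i set \<Rightarrow> ('i \<Rightarrow> real) \<Rightarrow> ('i \<Rightarrow> real) \<Rightarrow> real \<Rightarrow> real" where
  "selected_loss A L S c = (\<Sum>i\<in>A. if selected A L S c i then L i else 0)"

definition loss_share :: "'i set \<Rightarrow> ('i \<Rightarrow> real) \<Rightarrow> ('i \<Rightarrow> real) \<Rightarrow> real \<Rightarrow> 'i \<Rightarrow> real" where
  "loss_share A L S c j = (if selected A L S c j then L j / selected_loss A L S c else 0)"

lemma loss_cdf_permute:
  assumes "p permutes A"
  shows "loss_cdf A (\<lambda>i. L (p i)) (\<lambda>i. S (p i)) t = loss_cdf A L S t"
  unfolding loss_cdf_def using sum.permute[OF assms, of "\<lambda>i. if S i \<le> t then L i else 0"]
  by (simp add: comp_def)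

lemma selected_permute:
  assumes "p permutes A"
  shows "selected A (\<lambda>i. L (p i)) (\<lambda>i. S (p i)) c j \<longleftrightarrow> selected A L S c (p j)"
proof -
  have "(\<exists>k\<in>A. P (p k)) \<longleftrightarrow> (\<exists>k\<in>A. P k)" for P
    using permutes_image[OF assms] by (metis imageE image_eqI)
  from this[of "\<lambda>k. loss_cdf A L S (S k) \<le> c \<and> S (p j) \<le> S k"] show ?thesis
    unfolding selected_def loss_cdf_permute[OF assms] .
qed

lemma selected_loss_permute:
  assumes "p permutes A"
  shows "selected_loss A (\<lambda>i. L (p i)) (\<lambda>i. S (p i)) c = selected_loss A L S c"
  unfolding selected_loss_def selected_permute[OF assms]
  using sum.permute[OF assms, of "\<lambda>i. if selected A L S c i then L i else 0"]
  by (simp add: comp_def)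

lemma loss_share_permute:
  assumes "p permutes A"
  shows "loss_share A (\<lambda>i. L (p i)) (\<lambda>i. S (p i)) c j = loss_share A L S c (p j)"
  unfolding loss_share_def selected_permute[OF assms] selected_loss_permute[OF assms] by simp

lemma loss_share_cong:
  assumes "\<And>i. i \<in> A \<Longrightarrow> L i = L' i" "\<And>i. i \<in> A \<Longrightarrow> S i = S' i" "j \<in> A"
  shows "loss_share A L S c j = loss_share A L' S' c j"
proof -
  have "loss_cdf A L S t = loss_cdf A L' S' t" for t
    unfolding loss_cdf_def using assms by (auto intro!: sum.cong)
  then have sel: "selected A L S c k \<longleftrightarrow> selected A L' S' c k" if "k \<in> A" for k
    unfolding selected_def using assms that by auto
  then have "selected_loss A L S c = selected_loss A L' S' c"
    unfolding selected_loss_def using assms by (auto intro!: sum.cong)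
  then show ?thesis
    unfolding loss_share_def using sel assms by simp
qed

lemma loss_share_nonneg: "(\<And>i. i \<in> A \<Longrightarrow> 0 \<le> L i) \<Longrightarrow> j \<in> A \<Longrightarrow> 0 \<le> loss_share A L S c j"
  unfolding loss_share_def selected_loss_def by (auto intro!: divide_nonneg_nonneg sum_nonneg)

lemma sum_loss_share_le_1:
  assumes "finite A"
  shows "(\<Sum>j\<in>A. loss_share A L S c j) \<le> 1"
proof -
  have "(\<Sum>j\<in>A. loss_share A L S c j) = selected_loss A L S c / selected_loss A L S c"
    unfolding loss_share_def selected_loss_def sum_divide_distrib by (auto intro!: sum.cong)
  also have "\<dots> \<le> 1"
    by (cases "selected_loss A L S c = 0") auto
  finally show ?thesis .
qed

lemma loss_le_selected_loss:
  assumes "finite A" "\<And>i. i \<in> A \<Longrightarrow> 0 \<le> L i" "j \<in> A" "selected A L S c j"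
  shows "L j \<le> selected_loss A L S c"
  unfolding selected_loss_def
  using member_le_sum[of j A "\<lambda>i. if selected A L S c i then L i else 0"] assms by auto

lemma borel_measurable_loss_share [measurable]:
  assumes "finite A" "\<And>i. i \<in> A \<Longrightarrow> L i \<in> borel_measurable M"
    "\<And>i. i \<in> A \<Longrightarrow> S i \<in> borel_measurable M" "j \<in> A"
  shows "(\<lambda>x. loss_share A (\<lambda>i. L i x) (\<lambda>i. S i x) c j) \<in> borel_measurable M"
  unfolding loss_share_def selected_loss_def selected_def loss_cdf_def using assms by measurable

lemma F_hat_test_loss:
  "F_hat n Ls sc t (Ls (n+1)) = loss_cdf {1..n+1} Ls sc t / real (n+1)"
  unfolding F_hat_def loss_cdf_def by (auto simp: sum.cl_ivl_Suc intro!: sum.cong)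

lemma le_t_gamma_test_loss_iff:
  "ereal (sc j) \<le> t_gamma n Ls sc \<gamma> (Ls (n+1)) \<longleftrightarrow> selected {1..n+1} Ls sc (\<gamma> * real (n+1)) j"
proof -
  define T where "T = {t \<in> sc ` {1..n+1}. F_hat n Ls sc t (Ls (n+1)) \<le> \<gamma>}"
  have "F_hat n Ls sc t (Ls (n+1)) \<le> \<gamma> \<longleftrightarrow> loss_cdf {1..n+1} Ls sc t \<le> \<gamma> * real (n+1)" for t
    unfolding F_hat_test_loss by (simp add: divide_le_eq mult.commute)
  then have "(\<exists>t\<in>T. sc j \<le> t) \<longleftrightarrow> selected {1..n+1} Ls sc (\<gamma> * real (n+1)) j"
    unfolding T_def selected_def by auto
  moreover have "finite T"
    unfolding T_def by simp
  ultimately show ?thesis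
    unfolding t_gamma_def T_def[symmetric] by (auto simp: Max_ge_iff)
qed

lemma test_loss_mult_E_ratio:
  assumes "\<And>i. i \<in> {1..n+1} \<Longrightarrow> 0 \<le> Ls i"
  shows "ereal (Ls (n+1)) * E_ratio n Ls sc \<gamma> (Ls (n+1))
       = ereal (real (n+1) * loss_share {1..n+1} Ls sc (\<gamma> * real (n+1)) (n+1))"
proof -
  define A where "A = {1..n+1}"
  define c where "c = \<gamma> * real (n+1)"
  define D where "D = selected_loss A Ls sc c"
  have sel: "ereal (sc j) \<le> t_gamma n Ls sc \<gamma> (Ls (n+1)) \<longleftrightarrow> selected A Ls sc c j" for j
    unfolding A_def c_def by (rule le_t_gamma_test_loss_iff)
  have den: "(\<Sum>i=1..n. Ls i * (if selected A Ls sc c i then 1 else 0))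
          + Ls (n+1) * (if selected A Ls sc c (n+1) then 1 else 0) = D"
    unfolding D_def selected_loss_def A_def by (auto simp: sum.cl_ivl_Suc intro!: sum.cong)
  have E_ratio: "E_ratio n Ls sc \<gamma> (Ls (n+1))
      = (if selected A Ls sc c (n+1) then if D = 0 then \<infinity> else ereal (real (n+1) / D) else 0)"
    unfolding E_ratio_def Let_def sel den by simp
  show ?thesis
  proof (cases "selected A Ls sc c (n+1)")
    case True
    \<comment> \<open>if \<open>D = 0\<close> the ratio is \<open>\<infinity>\<close>, but then \<open>L\<^sub>n\<^sub>+\<^sub>1 = 0\<close> and \<open>0 * \<infinity> = 0\<close> in \<open>ereal\<close>\<close>
    have "Ls (n+1) \<le> D"
      unfolding D_def using assms True by (intro loss_le_selected_loss) (auto simp: A_def)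
    moreover have "0 \<le> Ls (n+1)"
      using assms by simp
    ultimately show ?thesis
      using True unfolding E_ratio loss_share_def A_def[symmetric] c_def[symmetric] D_def[symmetric]
      by (auto simp: zero_ereal_def)
  next
    case False
    then show ?thesis
      unfolding E_ratio loss_share_def A_def[symmetric] c_def[symmetric] by simp
  qed
qed

lemma E_gamma_nonneg:
  assumes "\<And>i. i \<in> {1..n} \<Longrightarrow> 0 \<le> Ls i"
  shows "0 \<le> E_gamma n Ls sc \<gamma>"
proof -
  have "0 \<le> E_ratio n Ls sc \<gamma> l" if "l \<in> {0..1}" for l
    using that assms unfolding E_ratio_def Let_def
    by (auto intro!: divide_nonneg_nonneg sum_nonneg add_nonneg_nonneg)
  then show ?thesis
    unfolding E_gamma_def by (auto intro: INF_greatest)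
qed

text \<open>The infimum defining \<open>E\<^sub>\<gamma>\<^sub>,\<^sub>n\<^sub>+\<^sub>1\<close> is bounded by its term at \<open>\<ell> = L\<^sub>n\<^sub>+\<^sub>1\<close>.\<close>
lemma test_loss_mult_E_gamma_le:
  assumes "\<And>i. i \<in> {1..n+1} \<Longrightarrow> 0 \<le> Ls i" "Ls (n+1) \<le> 1"
  shows "e2ennreal (ereal (Ls (n+1)) * E_gamma n Ls sc \<gamma>)
       \<le> of_nat (n+1) * ennreal (loss_share {1..n+1} Ls sc (\<gamma> * real (n+1)) (n+1))"
proof -
  have L: "0 \<le> Ls (n+1)" "Ls (n+1) \<in> {0..1}"
    using assms by auto
  have "0 \<le> loss_share {1..n+1} Ls sc (\<gamma> * real (n+1)) (n+1)"
    using assms by (intro loss_share_nonneg) auto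
  then have "0 \<le> ereal (Ls (n+1)) * E_ratio n Ls sc \<gamma> (Ls (n+1))"
    using test_loss_mult_E_ratio[of n Ls sc \<gamma>] assms(1) by simp
  moreover have "E_gamma n Ls sc \<gamma> = 0 \<or> E_gamma n Ls sc \<gamma> \<le> E_ratio n Ls sc \<gamma> (Ls (n+1))"
    unfolding E_gamma_def using L by (auto intro: INF_lower)
  ultimately have "ereal (Ls (n+1)) * E_gamma n Ls sc \<gamma> \<le> ereal (Ls (n+1)) * E_ratio n Ls sc \<gamma> (Ls (n+1))"
    using L by (auto intro: ereal_mult_left_mono)
  also have "\<dots> = ereal (real (n+1) * loss_share {1..n+1} Ls sc (\<gamma> * real (n+1)) (n+1))"
    using assms(1) by (rule test_loss_mult_E_ratio)
  finally show ?thesis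
    by (auto dest: e2ennreal_mono simp: ennreal_mult' ennreal_of_nat_eq_real_of_nat)
qed

lemma exchangeable_nn_integral_eq:
  fixes Z :: "'i \<Rightarrow> 'w \<Rightarrow> 'a" and \<Phi> :: "'i \<Rightarrow> ('i \<Rightarrow> 'a) \<Rightarrow> ennreal"
  assumes Z: "\<And>i. i \<in> A \<Longrightarrow> Z i \<in> measurable M N"
    and exch: "\<And>p. p permutes A \<Longrightarrow>
        distr M (PiM A (\<lambda>_. N)) (\<lambda>\<omega>. \<lambda>i\<in>A. Z (p i) \<omega>) = distr M (PiM A (\<lambda>_. N)) (\<lambda>\<omega>. \<lambda>i\<in>A. Z i \<omega>)"
    and \<Phi>: "\<And>j. j \<in> A \<Longrightarrow> \<Phi> j \<in> borel_measurable (PiM A (\<lambda>_. N))"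
    and equivariant: "\<And>p z j. p permutes A \<Longrightarrow> j \<in> A \<Longrightarrow> \<Phi> j (\<lambda>i\<in>A. z (p i)) = \<Phi> (p j) (\<lambda>i\<in>A. z i)"
    and "j \<in> A" "k \<in> A"
  shows "(\<integral>\<^sup>+\<omega>. \<Phi> j (\<lambda>i\<in>A. Z i \<omega>) \<partial>M) = (\<integral>\<^sup>+\<omega>. \<Phi> k (\<lambda>i\<in>A. Z i \<omega>) \<partial>M)"
proof -
  define p where "p = Transposition.transpose j k"
  have p: "p permutes A"
    unfolding p_def using \<open>j \<in> A\<close> \<open>k \<in> A\<close> by (rule permutes_swap_id)
  have measurable_permuted: "(\<lambda>\<omega>. \<lambda>i\<in>A. Z (q i) \<omega>) \<in> measurable M (PiM A (\<lambda>_. N))"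
    if "q permutes A" for q
    using Z permutes_in_image[OF that] by (auto intro!: measurable_restrict)
  have "(\<integral>\<^sup>+\<omega>. \<Phi> j (\<lambda>i\<in>A. Z i \<omega>) \<partial>M) = (\<integral>\<^sup>+\<omega>. \<Phi> k (\<lambda>i\<in>A. Z (p i) \<omega>) \<partial>M)"
    using equivariant[OF p \<open>k \<in> A\<close>, of "\<lambda>i. Z i _"] by (simp add: p_def)
  also have "\<dots> = (\<integral>\<^sup>+z. \<Phi> k z \<partial>distr M (PiM A (\<lambda>_. N)) (\<lambda>\<omega>. \<lambda>i\<in>A. Z (p i) \<omega>))"
    using \<Phi>[OF \<open>k \<in> A\<close>] measurable_permuted[OF p] by (simp add: nn_integral_distr)
  also have "\<dots> = (\<integral>\<^sup>+z. \<Phi> k z \<partial>distr M (PiM A (\<lambda>_. N)) (\<lambda>\<omega>. \<lambda>i\<in>A. Z i \<omega>))"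
    unfolding exch[OF p] ..
  also have "\<dots> = (\<integral>\<^sup>+\<omega>. \<Phi> k (\<lambda>i\<in>A. Z i \<omega>) \<partial>M)"
    using \<Phi>[OF \<open>k \<in> A\<close>] measurable_permuted[OF permutes_id] by (simp add: nn_integral_distr)
  finally show ?thesis .
qed

lemma card_mult_nn_integral_le:
  assumes "prob_space M" "finite A" "k \<in> A"
    and g: "\<And>j. j \<in> A \<Longrightarrow> g j \<in> borel_measurable M"
    and same: "\<And>j. j \<in> A \<Longrightarrow> (\<integral>\<^sup>+\<omega>. g j \<omega> \<partial>M) = (\<integral>\<^sup>+\<omega>. g k \<omega> \<partial>M)"
    and bound: "\<And>\<omega>. \<omega> \<in> space M \<Longrightarrow> (\<Sum>j\<in>A. g j \<omega>) \<le> c"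
  shows "of_nat (card A) * (\<integral>\<^sup>+\<omega>. g k \<omega> \<partial>M) \<le> c"
proof -
  have "of_nat (card A) * (\<integral>\<^sup>+\<omega>. g k \<omega> \<partial>M) = (\<Sum>j\<in>A. \<integral>\<^sup>+\<omega>. g j \<omega> \<partial>M)"
    using same by simp
  also have "\<dots> = (\<integral>\<^sup>+\<omega>. (\<Sum>j\<in>A. g j \<omega>) \<partial>M)"
    using g by (simp add: nn_integral_sum)
  also have "\<dots> \<le> (\<integral>\<^sup>+\<omega>. c \<partial>M)"
    using bound by (rule nn_integral_mono)
  also have "\<dots> = c"
    using prob_space.emeasure_space_1[OF \<open>prob_space M\<close>] by simp
  finally show ?thesis .
qed

text \<open>Under exchangeability every point has the same expected loss share, and the shares sum to
  at most 1.\<close>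
lemma exchangeable_loss_share_bound:
  fixes Z :: "'i \<Rightarrow> 'w \<Rightarrow> 'a"
  assumes "prob_space M" "finite A" "k \<in> A"
    and Z: "\<And>i. i \<in> A \<Longrightarrow> Z i \<in> measurable M N"
    and exch: "\<And>p. p permutes A \<Longrightarrow>
        distr M (PiM A (\<lambda>_. N)) (\<lambda>\<omega>. \<lambda>i\<in>A. Z (p i) \<omega>) = distr M (PiM A (\<lambda>_. N)) (\<lambda>\<omega>. \<lambda>i\<in>A. Z i \<omega>)"
    and loss: "loss \<in> borel_measurable N" "\<And>z. 0 \<le> loss z"
    and score: "score \<in> borel_measurable N"
  shows "of_nat (card A) * (\<integral>\<^sup>+\<omega>. ennreal (loss_share A (\<lambda>i. loss (Z i \<omega>)) (\<lambda>i. score (Z i \<omega>)) c k) \<partial>M) \<le> 1"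
proof -
  define \<Phi> where "\<Phi> j z = ennreal (loss_share A (\<lambda>i. loss (z i)) (\<lambda>i. score (z i)) c j)" for j z
  have \<Phi>_restrict: "\<Phi> j (\<lambda>i\<in>A. z i) = \<Phi> j z" if "j \<in> A" for j z
    unfolding \<Phi>_def using that by (intro arg_cong[where f = ennreal] loss_share_cong) auto
  have \<Phi>_equivariant: "\<Phi> j (\<lambda>i\<in>A. z (p i)) = \<Phi> (p j) (\<lambda>i\<in>A. z i)"
    if p: "p permutes A" and "j \<in> A" for p z j
    using \<Phi>_restrict[of j "\<lambda>i. z (p i)"] \<Phi>_restrict[of "p j" z] permutes_in_image[OF p] \<open>j \<in> A\<close>
    by (simp add: \<Phi>_def loss_share_permute[OF p, of "\<lambda>i. loss (z i)" "\<lambda>i. score (z i)"])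
  have \<Phi>_meas: "\<Phi> j \<in> borel_measurable (PiM A (\<lambda>_. N))" if "j \<in> A" for j
    unfolding \<Phi>_def using \<open>finite A\<close> that loss(1) score by measurable
  show ?thesis
  proof (rule card_mult_nn_integral_le[OF \<open>prob_space M\<close> \<open>finite A\<close> \<open>k \<in> A\<close>])
    fix j assume "j \<in> A"
    show "(\<lambda>\<omega>. ennreal (loss_share A (\<lambda>i. loss (Z i \<omega>)) (\<lambda>i. score (Z i \<omega>)) c j)) \<in> borel_measurable M"
      using \<open>finite A\<close> \<open>j \<in> A\<close> Z loss(1) score by measurable
    show "(\<integral>\<^sup>+\<omega>. ennreal (loss_share A (\<lambda>i. loss (Z i \<omega>)) (\<lambda>i. score (Z i \<omega>)) c j) \<partial>M)
        = (\<integral>\<^sup>+\<omega>. ennreal (loss_share A (\<lambda>i. loss (Z i \<omega>)) (\<lambda>i. score (Z i \<omega>)) c k) \<partial>M)"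
      using exchangeable_nn_integral_eq[OF Z exch \<Phi>_meas \<Phi>_equivariant \<open>j \<in> A\<close> \<open>k \<in> A\<close>]
      unfolding \<Phi>_restrict[OF \<open>j \<in> A\<close>] \<Phi>_restrict[OF \<open>k \<in> A\<close>] unfolding \<Phi>_def .
  next
    fix \<omega>
    show "(\<Sum>j\<in>A. ennreal (loss_share A (\<lambda>i. loss (Z i \<omega>)) (\<lambda>i. score (Z i \<omega>)) c j)) \<le> 1"
      using \<open>finite A\<close> loss(2) by (simp add: sum_ennreal loss_share_nonneg sum_loss_share_le_1)
  qed
qed

theorem theorem4p1:
  fixes M :: "'w measure"
    and MX :: "'x measure" and MY :: "'y measure"
    and X :: "nat \<Rightarrow> 'w \<Rightarrow> 'x" and Y :: "nat \<Rightarrow> 'w \<Rightarrow> 'y"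
    and f :: 'f and risk :: "'f \<Rightarrow> 'x \<Rightarrow> 'y \<Rightarrow> real"
    and s :: "'x \<Rightarrow> real" and n :: nat and \<gamma> :: real
  assumes "prob_space M"
    and X_meas: "\<And>i. i \<in> {1..n+1} \<Longrightarrow> X i \<in> measurable M MX"
    and Y_meas: "\<And>i. i \<in> {1..n+1} \<Longrightarrow> Y i \<in> measurable M MY"
    and exch: "\<And>\<pi>. \<pi> permutes {1..n+1} \<Longrightarrow>
        distr M (PiM {1..n+1} (\<lambda>_. MX \<Otimes>\<^sub>M MY)) (\<lambda>\<omega>. \<lambda>i\<in>{1..n+1}. (X (\<pi> i) \<omega>, Y (\<pi> i) \<omega>))
      = distr M (PiM {1..n+1} (\<lambda>_. MX \<Otimes>\<^sub>M MY)) (\<lambda>\<omega>. \<lambda>i\<in>{1..n+1}. (X i \<omega>, Y i \<omega>))"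
    and risk_meas: "(\<lambda>(x, y). risk f x y) \<in> borel_measurable (MX \<Otimes>\<^sub>M MY)"
    and risk_range: "\<And>x y. 0 \<le> risk f x y \<and> risk f x y \<le> 1"
    and s_meas: "s \<in> borel_measurable MX"
    and s_range: "\<And>x. 0 \<le> s x \<and> s x \<le> 1"
    and gamma: "0 < \<gamma>" "\<gamma> < 1"
  shows "(\<forall>\<omega>\<in>space M.
            0 \<le> E_gamma n (\<lambda>i. risk f (X i \<omega>) (Y i \<omega>)) (\<lambda>i. s (X i \<omega>)) \<gamma>)
       \<and> (\<integral>\<^sup>+ \<omega>. e2ennreal (ereal (risk f (X (n+1) \<omega>) (Y (n+1) \<omega>))
               * E_gamma n (\<lambda>i. risk f (X i \<omega>) (Y i \<omega>)) (\<lambda>i. s (X i \<omega>)) \<gamma>) \<partial>M) \<le> 1"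
proof -
  define A where "A = {1..n+1}"
  define c where "c = \<gamma> * real (n+1)"
  define G where "G \<omega> = ennreal (loss_share A (\<lambda>i. risk f (X i \<omega>) (Y i \<omega>)) (\<lambda>i. s (X i \<omega>)) c (n+1))" for \<omega>
  have "of_nat (card A) * (\<integral>\<^sup>+\<omega>. ennreal (loss_share A
          (\<lambda>i. (\<lambda>(x, y). risk f x y) (X i \<omega>, Y i \<omega>)) (\<lambda>i. (s \<circ> fst) (X i \<omega>, Y i \<omega>)) c (n+1)) \<partial>M) \<le> 1"
    using X_meas Y_meas exch risk_meas risk_range s_meas unfolding A_def
    by (intro exchangeable_loss_share_bound[OF \<open>prob_space M\<close>]) auto
  then have G_bound: "of_nat (n+1) * (\<integral>\<^sup>+\<omega>. G \<omega> \<partial>M) \<le> 1"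
    by (simp add: G_def A_def)
  have G_meas: "G \<in> borel_measurable M"
    unfolding G_def A_def using X_meas Y_meas risk_meas s_meas by measurable
  have "(\<integral>\<^sup>+\<omega>. e2ennreal (ereal (risk f (X (n+1) \<omega>) (Y (n+1) \<omega>))
          * E_gamma n (\<lambda>i. risk f (X i \<omega>) (Y i \<omega>)) (\<lambda>i. s (X i \<omega>)) \<gamma>) \<partial>M)
      \<le> (\<integral>\<^sup>+\<omega>. of_nat (n+1) * G \<omega> \<partial>M)"
    unfolding G_def A_def c_def using risk_range by (intro nn_integral_mono test_loss_mult_E_gamma_le) auto
  also have "\<dots> = of_nat (n+1) * (\<integral>\<^sup>+\<omega>. G \<omega> \<partial>M)"
    using G_meas by (rule nn_integral_cmult)
  finally show ?thesis
    using G_bound E_gamma_nonneg risk_range by auto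
qed

end
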